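(* Let $\theta:\mathbb{R}\to\mathbb{R}$ be convex, $I\subset\mathbb{R}$, $T:I\to\mathbb{R}$ a map, $[a,b]=\overline{\mathrm{co}(T(I))}$ and $y_0\in(a,b)$. (a) Assume $T$ is nondecreasing and define $\underline S(y):=\inf\{x:T(x)\ge y\}$ and $\underline\psi(y):=\int_{y_0}^y\partial_-\theta(z-\underline S(z))\,dz$ for $y\in(a,b)$. Then $\underline\psi$ is continuous on $(a,b)$ and, for every $x\in I$ and all $y'\in[T(x-),T(x)]\cap[a,b]$, \[ -\underline\psi(y')+\theta(y'-x)=\inf_{y\in[a,b]}\big(-\underline\psi(y)+\theta(y-x)\big). \] (b) Assume $T$ is nonincreasing and define $\overline S(y):=\sup\{x:T(x)\ge y\}$ and $\overline\psi(y):=\int_{y_0}^y\partial_-\theta(z-\overline S(z))\,dz$ for $y\in(a,b)$. Then $\overline\psi$ is continuous on $(a,b)$ and, for every $x\in I$ and all $y'\in[T(x+),T(x)]\cap[a,b]$, \[ -\overline\psi(y')+\theta(y'-x)=\sup_{y\in[a,b]}\big(-\overline\psi(y)+\theta(y-x)\big). \]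
   Context: $\partial_-\theta$ denotes the left-hand derivative of $\theta$; $\mathrm{co}$ denotes convex hull; $T(x-)$ and $T(x+)$ denote left and right limits of the monotone map $T$ at $x$. *)

theory Defs
  imports "HOL-Analysis.Analysis"
begin

text \<open>Left-hand derivative of a real function (exists everywhere for convex functions).\<close>
definition left_deriv :: "(real \<Rightarrow> real) \<Rightarrow> real \<Rightarrow> real" where
  "left_deriv \<theta> z = (THE d. ((\<lambda>t. (\<theta> t - \<theta> z) / (t - z)) \<longlongrightarrow> d) (at_left z))"

definition S_lower :: "real set \<Rightarrow> (real \<Rightarrow> real) \<Rightarrow> real \<Rightarrow> real" where
  "S_lower I T y = Inf {x \<in> I. y \<le> T x}"

definition S_upper :: "real set \<Rightarrow> (real \<Rightarrow> real) \<Rightarrow> real \<Rightarrow> real" where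
  "S_upper I T y = Sup {x \<in> I. y \<le> T x}"

definition psi_of :: "(real \<Rightarrow> real) \<Rightarrow> (real \<Rightarrow> real) \<Rightarrow> real \<Rightarrow> real \<Rightarrow> real" where
  "psi_of \<theta> S y0 y = (LBINT z = ereal y0..ereal y. left_deriv \<theta> (z - S z))"

definition ext_ab :: "real \<Rightarrow> real \<Rightarrow> (real \<Rightarrow> real) \<Rightarrow> real \<Rightarrow> ereal" where
  "ext_ab a b f y = (if a < y \<and> y < b then ereal (f y)
                     else Lim (at y within {a<..<b}) (\<lambda>z. ereal (f z)))"

end

(*
  Write D for the left derivative of theta and S for the generalized inverse. A convex function is
  the integral of its left derivative, so for a < p <= q < b

    (theta (q - x) - psi q) - (theta (p - x) - psi p) = integral over (p, q) of D (z - x) - D (z - S z).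

  As D is nondecreasing, the integrand has the sign of S z - x. The hypotheses on x and y' say that
  S crosses the level x at y': in case (a) S <= x to the left of y' and S >= x to the right, so
  theta (y - x) - psi y decreases and then increases and y' is a minimiser over (a, b); in case (b)
  the crossing is reversed and y' is a maximiser. Taking x = S y0 and y' = y0 shows that
  theta (y - S y0) - psi y is monotone near a and near b, hence psi has limits in the extended reals
  at both endpoints. The extension of psi to [a, b] is therefore continuous from inside, and the
  endpoints are covered by passing to the limit.
*)
theory Submission
  imports Defs
begin

section \<open>Convex functions and their left derivatives\<close>

lemma diff_divide_diff_commute: "((a::'a::field) - b) / (c - d) = (b - a) / (d - c)"
  by (metis minus_diff_eq minus_divide_divide)

lemma convex_on_UNIV_slope_mono:
  fixes \<theta> :: "real \<Rightarrow> real"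
  assumes conv: "convex_on UNIV \<theta>" and "x < t" "t < y"
  shows "(\<theta> t - \<theta> x) / (t - x) \<le> (\<theta> y - \<theta> x) / (y - x)"
    and "(\<theta> y - \<theta> x) / (y - x) \<le> (\<theta> y - \<theta> t) / (y - t)"
  using convex_on_slope_le[OF conv _ _ assms(2,3)]
  by (simp_all add: diff_divide_diff_commute[of "\<theta> x"] diff_divide_diff_commute[of "\<theta> t" "\<theta> y"])

lemma left_deriv_tendsto:
  fixes \<theta> :: "real \<Rightarrow> real"
  assumes conv: "convex_on UNIV \<theta>"
  shows "((\<lambda>t. (\<theta> t - \<theta> z) / (t - z)) \<longlongrightarrow> left_deriv \<theta> z) (at_left z)"
proof -
  let ?q = "\<lambda>t. (\<theta> t - \<theta> z) / (t - z)"
  have "(?q \<longlongrightarrow> Sup (?q ` ({..<z} \<inter> UNIV))) (at z within ({..<z} \<inter> UNIV))"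
  proof (rule Lim_left_bound)
    show "?q u \<le> ?q v" if "u \<le> v" "v < z" for u v
    proof (cases "u = v")
      case False
      then show ?thesis
        using convex_on_UNIV_slope_mono(2)[OF conv _ \<open>v < z\<close>, of u] that
        by (simp add: diff_divide_diff_commute[of "\<theta> u"] diff_divide_diff_commute[of "\<theta> v"])
    qed simp
    show "?q u \<le> (\<theta> (z + 1) - \<theta> z) / (z + 1 - z)" if "u < z" for u
      using convex_on_UNIV_slope_mono[OF conv that, of "z + 1"]
      by (simp add: diff_divide_diff_commute[of "\<theta> u"])
  qed
  then have lim: "(?q \<longlongrightarrow> Sup (?q ` {..<z})) (at_left z)"
    by (simp add: lessThan_def)
  moreover have "left_deriv \<theta> z = Sup (?q ` {..<z})"
    unfolding left_deriv_def
  proof (rule the_equality)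
    show "(?q \<longlongrightarrow> Sup (?q ` {..<z})) (at_left z)" by (rule lim)
    show "d = Sup (?q ` {..<z})" if "(?q \<longlongrightarrow> d) (at_left z)" for d
      using tendsto_unique[OF trivial_limit_at_left_real that lim] .
  qed
  ultimately show ?thesis by simp
qed

lemma slope_le_left_deriv:
  fixes \<theta> :: "real \<Rightarrow> real"
  assumes conv: "convex_on UNIV \<theta>" and "s < t"
  shows "(\<theta> t - \<theta> s) / (t - s) \<le> left_deriv \<theta> t"
proof (rule tendsto_lowerbound[OF left_deriv_tendsto[OF conv]])
  show "\<forall>\<^sub>F u in at_left t. (\<theta> t - \<theta> s) / (t - s) \<le> (\<theta> u - \<theta> t) / (u - t)"
    using eventually_at_left_real[OF \<open>s < t\<close>]
  proof eventually_elim
    case (elim u)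
    then show ?case
      using convex_on_UNIV_slope_mono(2)[OF conv, of s u t]
      by (simp add: diff_divide_diff_commute[of "\<theta> u"])
  qed
qed simp

lemma left_deriv_le_slope:
  fixes \<theta> :: "real \<Rightarrow> real"
  assumes conv: "convex_on UNIV \<theta>" and "s < t"
  shows "left_deriv \<theta> s \<le> (\<theta> t - \<theta> s) / (t - s)"
proof (rule tendsto_upperbound[OF left_deriv_tendsto[OF conv]])
  have "\<forall>\<^sub>F u in at_left s. u \<in> {s - 1<..<s}"
    by (rule eventually_at_left_real) simp
  then show "\<forall>\<^sub>F u in at_left s. (\<theta> u - \<theta> s) / (u - s) \<le> (\<theta> t - \<theta> s) / (t - s)"
  proof eventually_elim
    case (elim u)
    then have "(\<theta> s - \<theta> u) / (s - u) \<le> (\<theta> t - \<theta> s) / (t - s)"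
      using convex_on_UNIV_slope_mono[OF conv _ \<open>s < t\<close>, of u] by simp
    then show ?case
      by (simp add: diff_divide_diff_commute[of "\<theta> u"])
  qed
qed simp

lemma mono_left_deriv:
  fixes \<theta> :: "real \<Rightarrow> real"
  assumes conv: "convex_on UNIV \<theta>"
  shows "mono (left_deriv \<theta>)"
proof (rule monoI)
  fix s t :: real assume "s \<le> t"
  show "left_deriv \<theta> s \<le> left_deriv \<theta> t"
  proof (cases "s = t")
    case False
    with \<open>s \<le> t\<close> have "s < t" by simp
    from left_deriv_le_slope[OF conv this] slope_le_left_deriv[OF conv this]
    show ?thesis by (rule order_trans)
  qed simp
qed

lemma convex_on_UNIV_ereal_tendsto:
  fixes \<theta> :: "real \<Rightarrow> real"
  assumes conv: "convex_on UNIV \<theta>"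
  shows "((\<lambda>z. ereal (\<theta> (z - c))) \<longlongrightarrow> ereal (\<theta> (u - c))) (at u within A)"
proof -
  have "isCont \<theta> (u - c)"
    using convex_on_continuous[OF open_UNIV conv] by (simp add: continuous_on_eq_continuous_at)
  then have "((\<lambda>z. \<theta> (z - c)) \<longlongrightarrow> \<theta> (u - c)) (at u within A)"
    by (rule isCont_tendsto_compose) (intro tendsto_intros)
  then show ?thesis by (simp add: lim_ereal)
qed

lemma convex_on_UNIV_minus_ereal_tendsto:
  fixes \<theta> G :: "real \<Rightarrow> real"
  assumes conv: "convex_on UNIV \<theta>" and lim: "((\<lambda>z. ereal (G z)) \<longlongrightarrow> l) (at u within A)"
  shows "((\<lambda>z. ereal (\<theta> (z - c) - G z)) \<longlongrightarrow> ereal (\<theta> (u - c)) - l) (at u within A)"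
  using tendsto_add_ereal_general2[OF _ convex_on_UNIV_ereal_tendsto[OF conv] tendsto_uminus_ereal[OF lim]]
  by (simp add: minus_ereal_def)

lemma constant_by_bisection:
  fixes F D :: "real \<Rightarrow> real"
  assumes "p \<le> q"
    and incr: "\<And>s t. p \<le> s \<Longrightarrow> s \<le> t \<Longrightarrow> t \<le> q \<Longrightarrow> \<bar>F t - F s\<bar> \<le> (D t - D s) * (t - s)"
  shows "F q = F p"
proof -
  have halved: "\<bar>F t - F s\<bar> \<le> (D t - D s) * (t - s) / 2 ^ n"
    if "p \<le> s" "s \<le> t" "t \<le> q" for n s t
    using that
  proof (induction n arbitrary: s t)
    case 0
    then show ?case using incr by simp
  next
    case (Suc n)
    define m where "m = (s + t) / 2"
    have "\<bar>F t - F s\<bar> \<le> \<bar>F m - F s\<bar> + \<bar>F t - F m\<bar>" by linarith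
    also have "\<dots> \<le> (D m - D s) * (m - s) / 2 ^ n + (D t - D m) * (t - m) / 2 ^ n"
      using Suc by (intro add_mono Suc.IH) (auto simp: m_def)
    also have "\<dots> = (D t - D s) * (t - s) / 2 ^ Suc n"
      by (simp add: m_def field_simps)
    finally show ?case .
  qed
  have "(\<lambda>n. (D q - D p) * (q - p) / 2 ^ n) \<longlonglongrightarrow> 0"
    by (intro LIMSEQ_divide_realpow_zero) auto
  then have "\<bar>F q - F p\<bar> \<le> 0"
    by (rule LIMSEQ_le_const) (use halved \<open>p \<le> q\<close> in auto)
  then show ?thesis by simp
qed

lemma has_integral_left_deriv:
  fixes \<theta> :: "real \<Rightarrow> real"
  assumes conv: "convex_on UNIV \<theta>" and "p \<le> q"
  shows "(left_deriv \<theta> has_integral \<theta> q - \<theta> p) {p..q}"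
proof -
  let ?D = "left_deriv \<theta>"
  have mono: "?D s \<le> ?D t" if "s \<le> t" for s t
    using mono_left_deriv[OF conv] that by (rule monoD)
  have int: "?D integrable_on {s..t}" for s t
    by (rule integrable_on_mono_on) (auto intro: mono_onI mono)
  define F where "F t = \<theta> t - integral {p..t} ?D" for t
  have "F q = F p"
  proof (rule constant_by_bisection[OF \<open>p \<le> q\<close>, of F ?D])
    fix s t assume st: "p \<le> s" "s \<le> t" "t \<le> q"
    have "integral {p..s} ?D + integral {s..t} ?D = integral {p..t} ?D"
      by (rule Henstock_Kurzweil_Integration.integral_combine) (use st int in auto)
    then have diff: "F t - F s = (\<theta> t - \<theta> s) - integral {s..t} ?D"
      by (simp add: F_def)
    have int_bounds: "?D s * (t - s) \<le> integral {s..t} ?D" "integral {s..t} ?D \<le> ?D t * (t - s)"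
      using integral_le[of "\<lambda>_. ?D s" "{s..t}" ?D] integral_le[of ?D "{s..t}" "\<lambda>_. ?D t"] st
      by (auto simp: int mono mult.commute)
    have theta_bounds: "?D s * (t - s) \<le> \<theta> t - \<theta> s \<and> \<theta> t - \<theta> s \<le> ?D t * (t - s)"
    proof (cases "s = t")
      case False
      with st have "s < t" by simp
      then show ?thesis
        using left_deriv_le_slope[OF conv \<open>s < t\<close>] slope_le_left_deriv[OF conv \<open>s < t\<close>]
        by (simp add: field_simps)
    qed simp
    show "\<bar>F t - F s\<bar> \<le> (?D t - ?D s) * (t - s)"
      using diff int_bounds theta_bounds by (simp add: left_diff_distrib abs_le_iff)
  qed
  then have "integral {p..q} ?D = \<theta> q - \<theta> p"
    by (simp add: F_def)
  with int[of p q] show ?thesis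
    by (metis has_integral_integral)
qed

section \<open>Monotone functions on an open interval\<close>

lemma ereal_tendsto_at_right_if_monotone:
  fixes f :: "real \<Rightarrow> real"
  assumes "a < p" and f: "mono_on {a<..<p} f \<or> antimono_on {a<..<p} f"
  shows "\<exists>l. ((\<lambda>z. ereal (f z)) \<longlongrightarrow> l) (at_right a)"
proof -
  have at: "at a within ({a<..} \<inter> {a<..<p}) = at_right a"
    by (rule at_within_nhd[of _ "{..<p}"]) (use \<open>a < p\<close> in auto)
  have lim: "\<exists>l. (g \<longlongrightarrow> l) (at_right a)" if "mono_on {a<..<p} g" for g :: "real \<Rightarrow> ereal"
    using Lim_right_bound[of "{a<..<p}" a g bot] mono_onD[OF that] at by auto
  from f show ?thesis
  proof
    assume "mono_on {a<..<p} f"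
    then have "mono_on {a<..<p} (\<lambda>z. ereal (f z))"
      by (auto intro!: mono_onI dest: mono_onD)
    then show ?thesis by (rule lim)
  next
    assume "antimono_on {a<..<p} f"
    then have "mono_on {a<..<p} (\<lambda>z. - ereal (f z))"
      by (auto intro!: mono_onI dest: monotone_onD)
    then obtain l where "((\<lambda>z. - ereal (f z)) \<longlongrightarrow> l) (at_right a)"
      using lim by blast
    then have "((\<lambda>z. - (- ereal (f z))) \<longlongrightarrow> - l) (at_right a)"
      by (rule tendsto_uminus_ereal)
    then show ?thesis by auto
  qed
qed

lemma ereal_tendsto_at_left_if_monotone:
  fixes f :: "real \<Rightarrow> real"
  assumes "p < b" and f: "mono_on {p<..<b} f \<or> antimono_on {p<..<b} f"
  shows "\<exists>l. ((\<lambda>z. ereal (f z)) \<longlongrightarrow> l) (at_left b)"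
proof -
  have "antimono_on {-b<..<-p} (\<lambda>z. f (- z)) \<or> mono_on {-b<..<-p} (\<lambda>z. f (- z))"
    using f by (auto simp: monotone_on_def)
  then obtain l where "((\<lambda>z. ereal (f (- z))) \<longlongrightarrow> l) (at_right (- b))"
    using ereal_tendsto_at_right_if_monotone[of "- b" "- p"] \<open>p < b\<close> by auto
  then show ?thesis
    unfolding at_left_minus[of b] filterlim_filtermap by blast
qed

lemma monotone_on_ereal_iff:
  fixes G :: "'a::order \<Rightarrow> real"
  assumes "\<forall>y\<in>B. F y = ereal (G y)" and "A \<subseteq> B"
  shows "mono_on A F \<longleftrightarrow> mono_on A G" and "antimono_on A F \<longleftrightarrow> antimono_on A G"
  using assms by (auto simp: monotone_on_def subset_iff)

lemma le_on_Icc_if_le_on_Ioo: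
  fixes F :: "real \<Rightarrow> 'b::linorder_topology"
  assumes "a < b" and lim_a: "(F \<longlongrightarrow> F a) (at_right a)" and lim_b: "(F \<longlongrightarrow> F b) (at_left b)"
    and le: "\<forall>w\<in>{a<..<b}. c \<le> F w" and y: "y \<in> {a..b}"
  shows "c \<le> F y"
proof -
  consider "y \<in> {a<..<b}" | "y = a" | "y = b" using y by fastforce
  then show ?thesis
  proof cases
    case 1
    then show ?thesis using le by blast
  next
    case 2
    have "\<forall>\<^sub>F z in at_right a. c \<le> F z"
      using eventually_at_right_real[OF \<open>a < b\<close>] by (rule eventually_mono) (use le in blast)
    then show ?thesis
      using tendsto_lowerbound[OF lim_a] 2 by simp
  next
    case 3
    have "\<forall>\<^sub>F z in at_left b. c \<le> F z"
      using eventually_at_left_real[OF \<open>a < b\<close>] by (rule eventually_mono) (use le in blast)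
    then show ?thesis
      using tendsto_lowerbound[OF lim_b] 3 by simp
  qed
qed

lemma valley_minimum:
  fixes F :: "real \<Rightarrow> 'b::linorder_topology"
  assumes "a < b" and y': "y' \<in> {a..b}"
    and anti: "antimono_on ({a<..<b} \<inter> {..y'}) F" and mono: "mono_on ({a<..<b} \<inter> {y'..}) F"
    and lim_a: "(F \<longlongrightarrow> F a) (at_right a)" and lim_b: "(F \<longlongrightarrow> F b) (at_left b)"
    and y: "y \<in> {a..b}"
  shows "F y' \<le> F y"
proof -
  have "F y' \<le> F w" if w: "w \<in> {a<..<b}" for w
  proof -
    consider "y' \<in> {a<..<b}" | "y' = a" | "y' = b" using y' by fastforce
    then show ?thesis
    proof cases
      case 1
      then show ?thesis
        using monotone_onD[OF anti, of w y'] monotone_onD[OF mono, of y' w] w by (cases "w \<le> y'") auto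
    next
      case 2
      have "F z \<le> F w" if "z \<in> {a<..<w}" for z
        using monotone_onD[OF mono, of z w] w that 2 by auto
      then have "\<forall>\<^sub>F z in at_right a. F z \<le> F w"
        by (rule eventually_at_rightI) (use w in auto)
      then show ?thesis
        using tendsto_upperbound[OF lim_a] 2 by simp
    next
      case 3
      have "F z \<le> F w" if "z \<in> {w<..<b}" for z
        using monotone_onD[OF anti, of w z] w that 3 by auto
      then have "\<forall>\<^sub>F z in at_left b. F z \<le> F w"
        by (rule eventually_at_leftI) (use w in auto)
      then show ?thesis
        using tendsto_upperbound[OF lim_b] 3 by simp
    qed
  qed
  then show ?thesis
    using le_on_Icc_if_le_on_Ioo[OF \<open>a < b\<close> lim_a lim_b _ y] by blast
qed

section \<open>Indefinite integrals\<close>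

lemma interval_integral_diff_eq_integral:
  fixes g :: "real \<Rightarrow> real"
  assumes gint: "\<And>p q. a < p \<Longrightarrow> q < b \<Longrightarrow> set_integrable lborel {p..q} g"
    and y0: "y0 \<in> {a<..<b}" and pq: "a < p" "p \<le> q" "q < b"
  shows "(LBINT z=ereal y0..ereal q. g z) - (LBINT z=ereal y0..ereal p. g z) = integral {p..q} g"
proof -
  define m M where "m = min y0 p" and "M = max y0 q"
  have "set_integrable lborel {m..M} g" "m \<le> M"
    using gint y0 pq by (simp_all add: m_def M_def)
  then have "interval_lebesgue_integrable lborel (ereal m) (ereal M) g"
    unfolding interval_lebesgue_integrable_def by (auto intro: set_integrable_subset)
  moreover have "min (ereal y0) (min (ereal p) (ereal q)) = ereal m"
    "max (ereal y0) (max (ereal p) (ereal q)) = ereal M"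
    using pq by (auto simp: m_def M_def min_def max_def)
  ultimately have "(LBINT z=ereal y0..ereal p. g z) + (LBINT z=ereal p..ereal q. g z)
      = (LBINT z=ereal y0..ereal q. g z)"
    by (intro interval_integral_sum) simp
  moreover have "(LBINT z=ereal p..ereal q. g z) = integral {p..q} g"
    using pq set_borel_integral_eq_integral(2)[OF gint[OF pq(1,3)]]
    by (simp add: interval_integral_Icc)
  ultimately show ?thesis by linarith
qed

lemma continuous_on_interval_integral:
  fixes g :: "real \<Rightarrow> real"
  assumes gint: "\<And>p q. a < p \<Longrightarrow> q < b \<Longrightarrow> set_integrable lborel {p..q} g"
    and y0: "y0 \<in> {a<..<b}"
  shows "continuous_on {a<..<b} (\<lambda>y. LBINT z=ereal y0..ereal y. g z)"
proof (rule continuous_at_imp_continuous_on, intro ballI)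
  let ?\<psi> = "\<lambda>y. LBINT z=ereal y0..ereal y. g z"
  fix y assume y: "y \<in> {a<..<b}"
  define p q where "p = (a + y) / 2" and "q = (y + b) / 2"
  have pq: "a < p" "p < y" "y < q" "q < b" using y by (auto simp: p_def q_def)
  have "continuous_on {p..q} (\<lambda>z. ?\<psi> p + integral {p..z} g)"
    using set_borel_integral_eq_integral(1)[OF gint[OF pq(1,4)]]
    by (intro continuous_intros indefinite_integral_continuous_1)
  moreover have "?\<psi> p + integral {p..z} g = ?\<psi> z" if "z \<in> {p..q}" for z
    using interval_integral_diff_eq_integral[OF gint y0, of p z] pq that by auto
  ultimately have "continuous_on {p..q} ?\<psi>"
    using continuous_on_eq by force
  then show "isCont ?\<psi> y"
    by (rule continuous_on_interior) (use pq in auto)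
qed

lemma set_integrable_left_deriv_comp:
  fixes \<theta> h :: "real \<Rightarrow> real"
  assumes conv: "convex_on UNIV \<theta>"
    and h: "h \<in> borel_measurable (restrict_space borel {p..q})"
    and bounds: "\<And>z. z \<in> {p..q} \<Longrightarrow> lo \<le> h z \<and> h z \<le> hi"
  shows "set_integrable lborel {p..q} (\<lambda>z. left_deriv \<theta> (h z))"
proof (rule set_integrable_bound[where f = "\<lambda>_. \<bar>left_deriv \<theta> lo\<bar> + \<bar>left_deriv \<theta> hi\<bar>"])
  show "set_integrable lborel {p..q} (\<lambda>_. \<bar>left_deriv \<theta> lo\<bar> + \<bar>left_deriv \<theta> hi\<bar>)"
    by (rule borel_integrable_atLeastAtMost') (rule continuous_on_const)
  have "left_deriv \<theta> \<in> borel_measurable borel"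
    by (rule borel_measurable_mono[OF mono_left_deriv[OF conv]])
  with h have "(\<lambda>z. left_deriv \<theta> (h z)) \<in> borel_measurable (restrict_space borel {p..q})"
    by (rule measurable_compose)
  then show "set_borel_measurable lborel {p..q} (\<lambda>z. left_deriv \<theta> (h z))"
    unfolding set_borel_measurable_def by (subst (asm) borel_measurable_restrict_space_iff) auto
  have "left_deriv \<theta> lo \<le> left_deriv \<theta> (h z) \<and> left_deriv \<theta> (h z) \<le> left_deriv \<theta> hi"
    if "z \<in> {p..q}" for z
    using bounds[OF that] mono_left_deriv[OF conv] by (auto dest: monoD)
  then show "AE z in lborel. z \<in> {p..q} \<longrightarrow>
      norm (left_deriv \<theta> (h z)) \<le> norm (\<bar>left_deriv \<theta> lo\<bar> + \<bar>left_deriv \<theta> hi\<bar>)"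
    by (intro AE_I2) force
qed

lemma set_integrable_left_deriv_minus_monotone:
  fixes \<theta> S :: "real \<Rightarrow> real"
  assumes conv: "convex_on UNIV \<theta>"
    and S: "mono_on {a<..<b} S \<or> antimono_on {a<..<b} S"
    and "a < p" "q < b"
  shows "set_integrable lborel {p..q} (\<lambda>z. left_deriv \<theta> (z - S z))"
proof (cases "p \<le> q")
  case False
  then show ?thesis by (simp add: set_integrable_def)
next
  case True
  have sub: "{p..q} \<subseteq> {a<..<b}" using assms by auto
  have "S \<in> borel_measurable (restrict_space borel {p..q}) \<and>
      (\<forall>z\<in>{p..q}. min (S p) (S q) \<le> S z \<and> S z \<le> max (S p) (S q))"
    using S
  proof
    assume "mono_on {a<..<b} S"
    then have mono: "mono_on {p..q} S" using sub by (rule monotone_on_subset)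
    have "S p \<le> S z \<and> S z \<le> S q" if "z \<in> {p..q}" for z
      using mono_onD[OF mono, of p z] mono_onD[OF mono, of z q] that True by auto
    then show ?thesis
      using borel_measurable_mono_on_fnc[OF mono] by force
  next
    assume "antimono_on {a<..<b} S"
    then have "antimono_on {p..q} S" using sub by (rule monotone_on_subset)
    then have mono: "mono_on {p..q} (\<lambda>z. - S z)" by (auto intro!: mono_onI dest: monotone_onD)
    have "(\<lambda>z. - (- S z)) \<in> borel_measurable (restrict_space borel {p..q})"
      using borel_measurable_mono_on_fnc[OF mono] by (rule borel_measurable_uminus)
    moreover have "S q \<le> S z \<and> S z \<le> S p" if "z \<in> {p..q}" for z
      using mono_onD[OF mono, of p z] mono_onD[OF mono, of z q] that True by auto
    ultimately show ?thesis by force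
  qed
  then have "S \<in> borel_measurable (restrict_space borel {p..q})"
    and "\<forall>z\<in>{p..q}. p - max (S p) (S q) \<le> z - S z \<and> z - S z \<le> q - min (S p) (S q)"
    by auto
  then show ?thesis
    by (intro set_integrable_left_deriv_comp[OF conv]
        borel_measurable_diff[OF measurable_restrict_space1[OF measurable_ident_sets[OF refl]]]) auto
qed

section \<open>The potential\<close>

lemma continuous_on_psi_of:
  fixes \<theta> S :: "real \<Rightarrow> real"
  assumes conv: "convex_on UNIV \<theta>" and y0: "y0 \<in> {a<..<b}"
    and S: "mono_on {a<..<b} S \<or> antimono_on {a<..<b} S"
  shows "continuous_on {a<..<b} (psi_of \<theta> S y0)"
  using continuous_on_interval_integral[OF set_integrable_left_deriv_minus_monotone[OF conv S] y0]
  by (simp add: psi_of_def[abs_def])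

lemma psi_of_increment_has_integral:
  fixes \<theta> S :: "real \<Rightarrow> real"
  assumes conv: "convex_on UNIV \<theta>"
    and S: "mono_on {a<..<b} S \<or> antimono_on {a<..<b} S"
    and y0: "y0 \<in> {a<..<b}" and pq: "a < p" "p \<le> q" "q < b"
  shows "((\<lambda>z. left_deriv \<theta> (z - c) - left_deriv \<theta> (z - S z)) has_integral
           (\<theta> (q - c) - psi_of \<theta> S y0 q) - (\<theta> (p - c) - psi_of \<theta> S y0 p)) {p<..<q}"
proof -
  note gint = set_integrable_left_deriv_minus_monotone[OF conv S]
  have "((\<lambda>z. left_deriv \<theta> (z - c)) has_integral \<theta> (q - c) - \<theta> (p - c)) {p..q}"
    using has_integral_shift_real_ivl[OF has_integral_left_deriv[OF conv, of "p - c" "q - c"], of "- c"] pq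
    by simp
  moreover have "((\<lambda>z. left_deriv \<theta> (z - S z)) has_integral psi_of \<theta> S y0 q - psi_of \<theta> S y0 p) {p..q}"
    using integrable_integral[OF set_borel_integral_eq_integral(1)[OF gint[OF pq(1,3)]]]
      interval_integral_diff_eq_integral[OF gint y0 pq]
    by (simp add: psi_of_def)
  ultimately have "((\<lambda>z. left_deriv \<theta> (z - c) - left_deriv \<theta> (z - S z)) has_integral
      (\<theta> (q - c) - \<theta> (p - c)) - (psi_of \<theta> S y0 q - psi_of \<theta> S y0 p)) {p..q}"
    by (rule has_integral_diff)
  then show ?thesis
    by (simp add: has_integral_Icc_iff_Ioo algebra_simps)
qed

lemma theta_minus_psi_of_valley:
  fixes \<theta> S :: "real \<Rightarrow> real"
  assumes conv: "convex_on UNIV \<theta>"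
    and S: "mono_on {a<..<b} S \<or> antimono_on {a<..<b} S" and y0: "y0 \<in> {a<..<b}"
    and cross: "\<forall>z\<in>{a<..<b}. (z < y' \<longrightarrow> S z \<le> x) \<and> (y' < z \<longrightarrow> x \<le> S z)"
  shows "antimono_on ({a<..<b} \<inter> {..y'}) (\<lambda>y. \<theta> (y - x) - psi_of \<theta> S y0 y)"
    and "mono_on ({a<..<b} \<inter> {y'..}) (\<lambda>y. \<theta> (y - x) - psi_of \<theta> S y0 y)"
proof -
  note incr = psi_of_increment_has_integral[OF conv S y0, of _ _ x]
  have D: "left_deriv \<theta> s \<le> left_deriv \<theta> t" if "s \<le> t" for s t
    using mono_left_deriv[OF conv] that by (rule monoD)
  show "antimono_on ({a<..<b} \<inter> {..y'}) (\<lambda>y. \<theta> (y - x) - psi_of \<theta> S y0 y)"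
  proof (rule monotone_onI)
    fix p q assume pq: "p \<in> {a<..<b} \<inter> {..y'}" "q \<in> {a<..<b} \<inter> {..y'}" "p \<le> q"
    have "(\<theta> (q - x) - psi_of \<theta> S y0 q) - (\<theta> (p - x) - psi_of \<theta> S y0 p) \<le> 0"
      by (rule has_integral_le[OF incr has_integral_0]) (use pq cross D in auto)
    then show "\<theta> (q - x) - psi_of \<theta> S y0 q \<le> \<theta> (p - x) - psi_of \<theta> S y0 p" by simp
  qed
  show "mono_on ({a<..<b} \<inter> {y'..}) (\<lambda>y. \<theta> (y - x) - psi_of \<theta> S y0 y)"
  proof (rule monotone_onI)
    fix p q assume pq: "p \<in> {a<..<b} \<inter> {y'..}" "q \<in> {a<..<b} \<inter> {y'..}" "p \<le> q"
    have "0 \<le> (\<theta> (q - x) - psi_of \<theta> S y0 q) - (\<theta> (p - x) - psi_of \<theta> S y0 p)"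
      by (rule has_integral_nonneg[OF incr]) (use pq cross D in auto)
    then show "\<theta> (p - x) - psi_of \<theta> S y0 p \<le> \<theta> (q - x) - psi_of \<theta> S y0 q" by simp
  qed
qed

lemma theta_minus_psi_of_hill:
  fixes \<theta> S :: "real \<Rightarrow> real"
  assumes conv: "convex_on UNIV \<theta>"
    and S: "mono_on {a<..<b} S \<or> antimono_on {a<..<b} S" and y0: "y0 \<in> {a<..<b}"
    and cross: "\<forall>z\<in>{a<..<b}. (z < y' \<longrightarrow> x \<le> S z) \<and> (y' < z \<longrightarrow> S z \<le> x)"
  shows "mono_on ({a<..<b} \<inter> {..y'}) (\<lambda>y. \<theta> (y - x) - psi_of \<theta> S y0 y)"
    and "antimono_on ({a<..<b} \<inter> {y'..}) (\<lambda>y. \<theta> (y - x) - psi_of \<theta> S y0 y)"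
proof -
  note incr = psi_of_increment_has_integral[OF conv S y0, of _ _ x]
  have D: "left_deriv \<theta> s \<le> left_deriv \<theta> t" if "s \<le> t" for s t
    using mono_left_deriv[OF conv] that by (rule monoD)
  show "mono_on ({a<..<b} \<inter> {..y'}) (\<lambda>y. \<theta> (y - x) - psi_of \<theta> S y0 y)"
  proof (rule monotone_onI)
    fix p q assume pq: "p \<in> {a<..<b} \<inter> {..y'}" "q \<in> {a<..<b} \<inter> {..y'}" "p \<le> q"
    have "0 \<le> (\<theta> (q - x) - psi_of \<theta> S y0 q) - (\<theta> (p - x) - psi_of \<theta> S y0 p)"
      by (rule has_integral_nonneg[OF incr]) (use pq cross D in auto)
    then show "\<theta> (p - x) - psi_of \<theta> S y0 p \<le> \<theta> (q - x) - psi_of \<theta> S y0 q" by simp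
  qed
  show "antimono_on ({a<..<b} \<inter> {y'..}) (\<lambda>y. \<theta> (y - x) - psi_of \<theta> S y0 y)"
  proof (rule monotone_onI)
    fix p q assume pq: "p \<in> {a<..<b} \<inter> {y'..}" "q \<in> {a<..<b} \<inter> {y'..}" "p \<le> q"
    have "(\<theta> (q - x) - psi_of \<theta> S y0 q) - (\<theta> (p - x) - psi_of \<theta> S y0 p) \<le> 0"
      by (rule has_integral_le[OF incr has_integral_0]) (use pq cross D in auto)
    then show "\<theta> (q - x) - psi_of \<theta> S y0 q \<le> \<theta> (p - x) - psi_of \<theta> S y0 p" by simp
  qed
qed

lemma psi_of_ereal_tendsto_endpoints:
  fixes \<theta> S :: "real \<Rightarrow> real"
  assumes conv: "convex_on UNIV \<theta>" and y0: "y0 \<in> {a<..<b}"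
    and S: "mono_on {a<..<b} S \<or> antimono_on {a<..<b} S"
  shows "\<exists>l. ((\<lambda>z. ereal (psi_of \<theta> S y0 z)) \<longlongrightarrow> l) (at_right a)"
    and "\<exists>l. ((\<lambda>z. ereal (psi_of \<theta> S y0 z)) \<longlongrightarrow> l) (at_left b)"
proof -
  define c where "c = S y0"
  define G where "G y = \<theta> (y - c) - psi_of \<theta> S y0 y" for y
  have "(mono_on ({a<..<b} \<inter> {..y0}) G \<or> antimono_on ({a<..<b} \<inter> {..y0}) G) \<and>
      (mono_on ({a<..<b} \<inter> {y0..}) G \<or> antimono_on ({a<..<b} \<inter> {y0..}) G)"
    using S
  proof
    assume mono: "mono_on {a<..<b} S"
    have "\<forall>z\<in>{a<..<b}. (z < y0 \<longrightarrow> S z \<le> c) \<and> (y0 < z \<longrightarrow> c \<le> S z)"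
      using mono_onD[OF mono _ y0] mono_onD[OF mono y0] by (auto simp: c_def)
    then show ?thesis
      unfolding G_def using theta_minus_psi_of_valley[OF conv S y0] by blast
  next
    assume anti: "antimono_on {a<..<b} S"
    have "\<forall>z\<in>{a<..<b}. (z < y0 \<longrightarrow> c \<le> S z) \<and> (y0 < z \<longrightarrow> S z \<le> c)"
      using monotone_onD[OF anti _ y0] monotone_onD[OF anti y0] by (auto simp: c_def)
    then show ?thesis
      unfolding G_def using theta_minus_psi_of_hill[OF conv S y0] by blast
  qed
  moreover have "{a<..<y0} \<subseteq> {a<..<b} \<inter> {..y0}" "{y0<..<b} \<subseteq> {a<..<b} \<inter> {y0..}"
    using y0 by auto
  ultimately have "mono_on {a<..<y0} G \<or> antimono_on {a<..<y0} G"
    "mono_on {y0<..<b} G \<or> antimono_on {y0<..<b} G"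
    by (meson monotone_on_subset)+
  then obtain la lb where "((\<lambda>z. ereal (G z)) \<longlongrightarrow> la) (at_right a)"
    and "((\<lambda>z. ereal (G z)) \<longlongrightarrow> lb) (at_left b)"
    using ereal_tendsto_at_right_if_monotone[of a y0 G] ereal_tendsto_at_left_if_monotone[of y0 b G] y0
    by auto
  then show "\<exists>l. ((\<lambda>z. ereal (psi_of \<theta> S y0 z)) \<longlongrightarrow> l) (at_right a)"
    "\<exists>l. ((\<lambda>z. ereal (psi_of \<theta> S y0 z)) \<longlongrightarrow> l) (at_left b)"
    using convex_on_UNIV_minus_ereal_tendsto[OF conv, where G = G and c = c] by (auto simp: G_def)
qed

lemma ext_ab_at_right:
  assumes "a < b" and lim: "((\<lambda>z. ereal (f z)) \<longlongrightarrow> l) (at_right a)"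
  shows "ext_ab a b f a = l" and "(ext_ab a b f \<longlongrightarrow> l) (at_right a)"
proof -
  have "at a within {a<..<b} = at_right a"
    by (rule at_within_nhd[of _ "{..<b}"]) (use \<open>a < b\<close> in auto)
  then show "ext_ab a b f a = l"
    using lim by (simp add: ext_ab_def tendsto_Lim)
  have "\<forall>\<^sub>F z in at_right a. ereal (f z) = ext_ab a b f z"
    using eventually_at_right_real[OF \<open>a < b\<close>] by eventually_elim (simp add: ext_ab_def)
  with lim show "(ext_ab a b f \<longlongrightarrow> l) (at_right a)"
    by (rule Lim_transform_eventually)
qed

lemma ext_ab_at_left:
  assumes "a < b" and lim: "((\<lambda>z. ereal (f z)) \<longlongrightarrow> l) (at_left b)"
  shows "ext_ab a b f b = l" and "(ext_ab a b f \<longlongrightarrow> l) (at_left b)"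
proof -
  have "at b within {a<..<b} = at_left b"
    by (rule at_within_nhd[of _ "{a<..}"]) (use \<open>a < b\<close> in auto)
  then show "ext_ab a b f b = l"
    using lim by (simp add: ext_ab_def tendsto_Lim)
  have "\<forall>\<^sub>F z in at_left b. ereal (f z) = ext_ab a b f z"
    using eventually_at_left_real[OF \<open>a < b\<close>] by eventually_elim (simp add: ext_ab_def)
  with lim show "(ext_ab a b f \<longlongrightarrow> l) (at_left b)"
    by (rule Lim_transform_eventually)
qed

lemma ext_ab_psi_of_cost:
  fixes \<theta> S :: "real \<Rightarrow> real" and x :: real
  assumes conv: "convex_on UNIV \<theta>" and y0: "y0 \<in> {a<..<b}"
    and S: "mono_on {a<..<b} S \<or> antimono_on {a<..<b} S"
    and F: "F = (\<lambda>y. - ext_ab a b (psi_of \<theta> S y0) y + ereal (\<theta> (y - x)))"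
  shows "\<forall>y\<in>{a<..<b}. F y = ereal (\<theta> (y - x) - psi_of \<theta> S y0 y)"
    and "(F \<longlongrightarrow> F a) (at_right a)" and "(F \<longlongrightarrow> F b) (at_left b)"
proof -
  have ab: "a < b" using y0 by simp
  obtain la lb where la: "((\<lambda>z. ereal (psi_of \<theta> S y0 z)) \<longlongrightarrow> la) (at_right a)"
    and lb: "((\<lambda>z. ereal (psi_of \<theta> S y0 z)) \<longlongrightarrow> lb) (at_left b)"
    using psi_of_ereal_tendsto_endpoints[OF conv y0 S] by blast
  show "\<forall>y\<in>{a<..<b}. F y = ereal (\<theta> (y - x) - psi_of \<theta> S y0 y)"
    by (simp add: F ext_ab_def)
  show "(F \<longlongrightarrow> F a) (at_right a)" "(F \<longlongrightarrow> F b) (at_left b)"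
    unfolding F ext_ab_at_right(1)[OF ab la] ext_ab_at_left(1)[OF ab lb]
    by (intro tendsto_add_ereal_general1[OF _ tendsto_uminus_ereal convex_on_UNIV_ereal_tendsto[OF conv]]
        ext_ab_at_right(2)[OF ab la] ext_ab_at_left(2)[OF ab lb]; simp)+
qed

lemma psi_of_INF_attained:
  fixes \<theta> S :: "real \<Rightarrow> real"
  assumes conv: "convex_on UNIV \<theta>" and y0: "y0 \<in> {a<..<b}"
    and S: "mono_on {a<..<b} S \<or> antimono_on {a<..<b} S"
    and y': "y' \<in> {a..b}"
    and cross: "\<forall>z\<in>{a<..<b}. (z < y' \<longrightarrow> S z \<le> x) \<and> (y' < z \<longrightarrow> x \<le> S z)"
  shows "- ext_ab a b (psi_of \<theta> S y0) y' + ereal (\<theta> (y' - x)) =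
    (INF y\<in>{a..b}. - ext_ab a b (psi_of \<theta> S y0) y + ereal (\<theta> (y - x)))"
proof -
  define F where "F = (\<lambda>y. - ext_ab a b (psi_of \<theta> S y0) y + ereal (\<theta> (y - x)))"
  note cost = ext_ab_psi_of_cost[OF conv y0 S F_def]
  have ab: "a < b" using y0 by simp
  note G = theta_minus_psi_of_valley[OF conv S y0 cross]
  have "antimono_on ({a<..<b} \<inter> {..y'}) F" "mono_on ({a<..<b} \<inter> {y'..}) F"
    using monotone_on_ereal_iff(2)[OF cost(1) Int_lower1, THEN iffD2, OF G(1)]
      monotone_on_ereal_iff(1)[OF cost(1) Int_lower1, THEN iffD2, OF G(2)] .
  then have "F y' \<le> F y" if "y \<in> {a..b}" for y
    using valley_minimum[OF ab y' _ _ cost(2,3) that] by blast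
  then have "F y' = (INF y\<in>{a..b}. F y)"
    using y' by (intro antisym INF_greatest INF_lower)
  then show ?thesis by (simp add: F_def)
qed

lemma psi_of_SUP_attained:
  fixes \<theta> S :: "real \<Rightarrow> real"
  assumes conv: "convex_on UNIV \<theta>" and y0: "y0 \<in> {a<..<b}"
    and S: "mono_on {a<..<b} S \<or> antimono_on {a<..<b} S"
    and y': "y' \<in> {a..b}"
    and cross: "\<forall>z\<in>{a<..<b}. (z < y' \<longrightarrow> x \<le> S z) \<and> (y' < z \<longrightarrow> S z \<le> x)"
  shows "- ext_ab a b (psi_of \<theta> S y0) y' + ereal (\<theta> (y' - x)) =
    (SUP y\<in>{a..b}. - ext_ab a b (psi_of \<theta> S y0) y + ereal (\<theta> (y - x)))"
proof -
  define F where "F = (\<lambda>y. - ext_ab a b (psi_of \<theta> S y0) y + ereal (\<theta> (y - x)))"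
  note cost = ext_ab_psi_of_cost[OF conv y0 S F_def]
  have ab: "a < b" using y0 by simp
  note G = theta_minus_psi_of_hill[OF conv S y0 cross]
  have "mono_on ({a<..<b} \<inter> {..y'}) F" "antimono_on ({a<..<b} \<inter> {y'..}) F"
    using monotone_on_ereal_iff(1)[OF cost(1) Int_lower1, THEN iffD2, OF G(1)]
      monotone_on_ereal_iff(2)[OF cost(1) Int_lower1, THEN iffD2, OF G(2)] .
  then have "antimono_on ({a<..<b} \<inter> {..y'}) (\<lambda>y. - F y)" "mono_on ({a<..<b} \<inter> {y'..}) (\<lambda>y. - F y)"
    by (simp_all add: monotone_on_def)
  then have "- F y' \<le> - F y" if "y \<in> {a..b}" for y
    using valley_minimum[OF ab y' _ _ tendsto_uminus_ereal[OF cost(2)] tendsto_uminus_ereal[OF cost(3)] that]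
    by blast
  then have "F y' = (SUP y\<in>{a..b}. F y)"
    using y' by (intro antisym SUP_least SUP_upper) auto
  then show ?thesis by (simp add: F_def)
qed

section \<open>Generalized inverses of monotone maps\<close>

lemma closure_convex_hull_eq_Icc_exists_gt:
  fixes A :: "real set"
  assumes hull: "closure (convex hull A) = {a..b}" and "a \<le> b" "y < b"
  shows "\<exists>t\<in>A. y < t"
proof (rule ccontr)
  assume "\<not> ?thesis"
  then have "closure (convex hull A) \<subseteq> {..y}"
    by (intro closure_minimal hull_minimal) (auto simp: not_less)
  with assms show False by auto
qed

lemma closure_convex_hull_eq_Icc_exists_lt:
  fixes A :: "real set"
  assumes hull: "closure (convex hull A) = {a..b}" and "a \<le> b" "a < y"
  shows "\<exists>t\<in>A. t < y"
proof (rule ccontr)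
  assume "\<not> ?thesis"
  then have "closure (convex hull A) \<subseteq> {y..}"
    by (intro closure_minimal hull_minimal) (auto simp: not_less)
  with assms show False by auto
qed

lemma superlevel_set_nonempty:
  fixes T :: "real \<Rightarrow> real"
  assumes hull: "closure (convex hull (T ` I)) = {a..b}" and z: "z \<in> {a<..<b}"
  shows "{x \<in> I. z \<le> T x} \<noteq> {}"
  using closure_convex_hull_eq_Icc_exists_gt[OF hull, of z] z by force

lemma bdd_below_superlevel_set:
  fixes T :: "real \<Rightarrow> real"
  assumes T: "mono_on I T" and hull: "closure (convex hull (T ` I)) = {a..b}" and z: "z \<in> {a<..<b}"
  shows "bdd_below {x \<in> I. z \<le> T x}"
proof -
  obtain x0 where x0: "x0 \<in> I" "T x0 < z"
    using closure_convex_hull_eq_Icc_exists_lt[OF hull, of z] z by force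
  have "x0 \<le> x" if "x \<in> I" "z \<le> T x" for x
    using mono_onD[OF T that(1) x0(1)] x0 that by force
  then show ?thesis by (intro bdd_belowI[of _ x0]) blast
qed

lemma bdd_above_superlevel_set:
  fixes T :: "real \<Rightarrow> real"
  assumes T: "antimono_on I T" and hull: "closure (convex hull (T ` I)) = {a..b}" and z: "z \<in> {a<..<b}"
  shows "bdd_above {x \<in> I. z \<le> T x}"
proof -
  obtain x0 where x0: "x0 \<in> I" "T x0 < z"
    using closure_convex_hull_eq_Icc_exists_lt[OF hull, of z] z by force
  have "x \<le> x0" if "x \<in> I" "z \<le> T x" for x
    using monotone_onD[OF T x0(1) that(1)] x0 that by force
  then show ?thesis by (intro bdd_aboveI[of _ x0]) blast
qed

lemma mono_on_S_lower:
  fixes T :: "real \<Rightarrow> real"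
  assumes T: "mono_on I T" and hull: "closure (convex hull (T ` I)) = {a..b}"
  shows "mono_on {a<..<b} (S_lower I T)"
proof (rule mono_onI)
  fix y1 y2 assume "y1 \<in> {a<..<b}" "y2 \<in> {a<..<b}" "y1 \<le> y2"
  then show "S_lower I T y1 \<le> S_lower I T y2"
    unfolding S_lower_def
    by (intro cInf_superset_mono superlevel_set_nonempty[OF hull] bdd_below_superlevel_set[OF T hull]) auto
qed

lemma antimono_on_S_upper:
  fixes T :: "real \<Rightarrow> real"
  assumes T: "antimono_on I T" and hull: "closure (convex hull (T ` I)) = {a..b}"
  shows "antimono_on {a<..<b} (S_upper I T)"
proof (rule monotone_onI)
  fix y1 y2 assume "y1 \<in> {a<..<b}" "y2 \<in> {a<..<b}" "y1 \<le> y2"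
  then show "S_upper I T y2 \<le> S_upper I T y1"
    unfolding S_upper_def
    by (intro cSup_subset_mono superlevel_set_nonempty[OF hull] bdd_above_superlevel_set[OF T hull]) auto
qed

lemma S_lower_crossing:
  fixes T :: "real \<Rightarrow> real"
  assumes T: "mono_on I T" and hull: "closure (convex hull (T ` I)) = {a..b}"
    and x: "x \<in> I" "y' \<le> T x" and jump: "\<forall>x'\<in>I. x' < x \<longrightarrow> T x' \<le> y'"
  shows "\<forall>z\<in>{a<..<b}. (z < y' \<longrightarrow> S_lower I T z \<le> x) \<and> (y' < z \<longrightarrow> x \<le> S_lower I T z)"
proof (intro ballI conjI impI)
  fix z assume z: "z \<in> {a<..<b}"
  show "S_lower I T z \<le> x" if "z < y'"
    unfolding S_lower_def
    by (rule cInf_lower) (use x that bdd_below_superlevel_set[OF T hull z] in auto)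
  show "x \<le> S_lower I T z" if "y' < z"
  proof -
    have "\<forall>x'\<in>I. x' < x \<longrightarrow> T x' < z" using jump that by force
    then show ?thesis
      unfolding S_lower_def
      by (intro cInf_greatest superlevel_set_nonempty[OF hull z]) (auto simp: not_less[symmetric])
  qed
qed

lemma S_upper_crossing:
  fixes T :: "real \<Rightarrow> real"
  assumes T: "antimono_on I T" and hull: "closure (convex hull (T ` I)) = {a..b}"
    and x: "x \<in> I" "y' \<le> T x" and jump: "\<forall>x'\<in>I. x < x' \<longrightarrow> T x' \<le> y'"
  shows "\<forall>z\<in>{a<..<b}. (z < y' \<longrightarrow> x \<le> S_upper I T z) \<and> (y' < z \<longrightarrow> S_upper I T z \<le> x)"
proof (intro ballI conjI impI)
  fix z assume z: "z \<in> {a<..<b}"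
  show "x \<le> S_upper I T z" if "z < y'"
    unfolding S_upper_def
    by (rule cSup_upper) (use x that bdd_above_superlevel_set[OF T hull z] in auto)
  show "S_upper I T z \<le> x" if "y' < z"
  proof -
    have "\<forall>x'\<in>I. x < x' \<longrightarrow> T x' < z" using jump that by force
    then show ?thesis
      unfolding S_upper_def
      by (intro cSup_least superlevel_set_nonempty[OF hull z]) (auto simp: not_less[symmetric])
  qed
qed

theorem lemma3p14:
  fixes \<theta> T :: "real \<Rightarrow> real" and I :: "real set" and a b y0 :: real
  assumes conv: "convex_on UNIV \<theta>"
    and hull: "closure (convex hull (T ` I)) = {a..b}"
    and y0: "y0 \<in> {a<..<b}"
  shows
    "(mono_on I T \<longrightarrow>
        continuous_on {a<..<b} (psi_of \<theta> (S_lower I T) y0) \<and>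
        (\<forall>x\<in>I. \<forall>y'\<in>{a..b}.
           (y' \<le> T x \<and> (\<forall>x'\<in>I. x' < x \<longrightarrow> T x' \<le> y')) \<longrightarrow>
           - ext_ab a b (psi_of \<theta> (S_lower I T) y0) y' + ereal (\<theta> (y' - x)) =
           (INF y\<in>{a..b}. - ext_ab a b (psi_of \<theta> (S_lower I T) y0) y + ereal (\<theta> (y - x)))))
     \<and>
     (monotone_on I (\<le>) (\<ge>) T \<longrightarrow>
        continuous_on {a<..<b} (psi_of \<theta> (S_upper I T) y0) \<and>
        (\<forall>x\<in>I. \<forall>y'\<in>{a..b}.
           (y' \<le> T x \<and> (\<forall>x'\<in>I. x < x' \<longrightarrow> T x' \<le> y')) \<longrightarrow>
           - ext_ab a b (psi_of \<theta> (S_upper I T) y0) y' + ereal (\<theta> (y' - x)) =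
           (SUP y\<in>{a..b}. - ext_ab a b (psi_of \<theta> (S_upper I T) y0) y + ereal (\<theta> (y - x)))))"
proof (intro conjI impI ballI)
  assume T: "mono_on I T"
  then have S: "mono_on {a<..<b} (S_lower I T) \<or> antimono_on {a<..<b} (S_lower I T)"
    using mono_on_S_lower[OF T hull] by blast
  show "continuous_on {a<..<b} (psi_of \<theta> (S_lower I T) y0)"
    by (rule continuous_on_psi_of[OF conv y0 S])
  fix x y' assume "x \<in> I" "y' \<in> {a..b}" "y' \<le> T x \<and> (\<forall>x'\<in>I. x' < x \<longrightarrow> T x' \<le> y')"
  then show "- ext_ab a b (psi_of \<theta> (S_lower I T) y0) y' + ereal (\<theta> (y' - x)) =
      (INF y\<in>{a..b}. - ext_ab a b (psi_of \<theta> (S_lower I T) y0) y + ereal (\<theta> (y - x)))"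
    using psi_of_INF_attained[OF conv y0 S] S_lower_crossing[OF T hull] by blast
next
  assume T: "antimono_on I T"
  then have S: "mono_on {a<..<b} (S_upper I T) \<or> antimono_on {a<..<b} (S_upper I T)"
    using antimono_on_S_upper[OF T hull] by blast
  show "continuous_on {a<..<b} (psi_of \<theta> (S_upper I T) y0)"
    by (rule continuous_on_psi_of[OF conv y0 S])
  fix x y' assume "x \<in> I" "y' \<in> {a..b}" "y' \<le> T x \<and> (\<forall>x'\<in>I. x < x' \<longrightarrow> T x' \<le> y')"
  then show "- ext_ab a b (psi_of \<theta> (S_upper I T) y0) y' + ereal (\<theta> (y' - x)) =
      (SUP y\<in>{a..b}. - ext_ab a b (psi_of \<theta> (S_upper I T) y0) y + ereal (\<theta> (y - x)))"
    using psi_of_SUP_attained[OF conv y0 S] S_upper_crossing[OF T hull] by blast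
qed

end
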